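(* For every tree $T$, $\varphi(T)=\varphi_r(T)$.
   Context: A proper $k$-coloring of $G$ is a surjective map $c:V(G)\to\{1,\ldots,k\}$ with $c(u)\ne c(v)$ for every edge $uv$. In a proper $k$-coloring, a vertex of color $i$ is a b-vertex if it has a neighbor of every color $j\ne i$. A b-$k$-coloring is a proper $k$-coloring in which every color class contains a b-vertex; $\varphi(G)$ is the largest $k$ such that $G$ has a b-$k$-coloring, and the b-relaxed number is $\varphi_r(G)=\max\{\varphi(H): H\text{ an induced subgraph of }G\}$. *)

theory Defs
  imports Main
begin

definition simple_graph :: "'a set \<Rightarrow> ('a \<Rightarrow> 'a \<Rightarrow> bool) \<Rightarrow> bool" where
  "simple_graph V E \<longleftrightarrow> finite V \<and> (\<forall>u v. E u v \<longrightarrow> E v u)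
     \<and> (\<forall>v. \<not> E v v) \<and> (\<forall>u v. E u v \<longrightarrow> u \<in> V \<and> v \<in> V)"

definition connected_graph :: "'a set \<Rightarrow> ('a \<Rightarrow> 'a \<Rightarrow> bool) \<Rightarrow> bool" where
  "connected_graph V E \<longleftrightarrow> V \<noteq> {} \<and>
     (\<forall>u\<in>V. \<forall>v\<in>V. (\<lambda>x y. x \<in> V \<and> y \<in> V \<and> E x y)\<^sup>*\<^sup>* u v)"

definition is_cycle :: "'a set \<Rightarrow> ('a \<Rightarrow> 'a \<Rightarrow> bool) \<Rightarrow> 'a list \<Rightarrow> bool" where
  "is_cycle V E xs \<longleftrightarrow> length xs \<ge> 3 \<and> distinct xs \<and> set xs \<subseteq> V
     \<and> (\<forall>i < length xs - 1. E (xs ! i) (xs ! Suc i)) \<and> E (last xs) (hd xs)"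

definition acyclic_graph :: "'a set \<Rightarrow> ('a \<Rightarrow> 'a \<Rightarrow> bool) \<Rightarrow> bool" where
  "acyclic_graph V E \<longleftrightarrow> (\<nexists>xs. is_cycle V E xs)"

definition tree :: "'a set \<Rightarrow> ('a \<Rightarrow> 'a \<Rightarrow> bool) \<Rightarrow> bool" where
  "tree V E \<longleftrightarrow> simple_graph V E \<and> connected_graph V E \<and> acyclic_graph V E"

definition proper_coloring :: "'a set \<Rightarrow> ('a \<Rightarrow> 'a \<Rightarrow> bool) \<Rightarrow> ('a \<Rightarrow> nat) \<Rightarrow> nat \<Rightarrow> bool" where
  "proper_coloring V E c k \<longleftrightarrow> c ` V = {1..k} \<and>
     (\<forall>u\<in>V. \<forall>v\<in>V. E u v \<longrightarrow> c u \<noteq> c v)"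

definition b_vertex :: "'a set \<Rightarrow> ('a \<Rightarrow> 'a \<Rightarrow> bool) \<Rightarrow> ('a \<Rightarrow> nat) \<Rightarrow> nat \<Rightarrow> 'a \<Rightarrow> bool" where
  "b_vertex V E c k v \<longleftrightarrow> v \<in> V \<and>
     (\<forall>j\<in>{1..k}. j \<noteq> c v \<longrightarrow> (\<exists>u\<in>V. E v u \<and> c u = j))"

definition b_coloring :: "'a set \<Rightarrow> ('a \<Rightarrow> 'a \<Rightarrow> bool) \<Rightarrow> ('a \<Rightarrow> nat) \<Rightarrow> nat \<Rightarrow> bool" where
  "b_coloring V E c k \<longleftrightarrow> proper_coloring V E c k \<and>
     (\<forall>i\<in>{1..k}. \<exists>v\<in>V. c v = i \<and> b_vertex V E c k v)"

definition b_chromatic :: "'a set \<Rightarrow> ('a \<Rightarrow> 'a \<Rightarrow> bool) \<Rightarrow> nat" where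
  "b_chromatic V E = Max {k. \<exists>c. b_coloring V E c k}"

text \<open>b-relaxed number: maximum of b-chromatic numbers over induced subgraphs
(the induced subgraph on S \<subseteq> V is the restriction of E to S).\<close>
definition b_relaxed :: "'a set \<Rightarrow> ('a \<Rightarrow> 'a \<Rightarrow> bool) \<Rightarrow> nat" where
  "b_relaxed V E = Max {b_chromatic S E | S. S \<subseteq> V}"

end

theory Submission
  imports Defs "HOL-Library.Transitive_Closure_Table" "HOL-Combinatorics.Transposition"
begin

text \<open>In a forest, every b-colouring with \<open>k \<ge> 2\<close> colours of an induced subgraph extends to
a b-colouring with \<open>k\<close> colours of the whole forest; as the forest itself has a b-colouring,
which uses at least one colour, no induced subgraph has a larger b-chromatic number.
The missing vertices are added one at a time. A new vertex \<open>x\<close> gets a colour \<open>t\<close>; in the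
component of each neighbour \<open>y\<close> of colour \<open>t\<close>, the colours \<open>t\<close> and some \<open>u y\<close> are
swapped. Acyclicity makes these components pairwise disjoint and separates them from the other
neighbours of \<open>x\<close>, so the result is proper, every old b-vertex stays a b-vertex, and \<open>x\<close> is
a b-vertex as soon as all colours occur around it. The work lies in choosing \<open>t\<close> and \<open>u\<close>
so that no colour class loses all its b-vertices.\<close>

definition induced_adj :: "'a set \<Rightarrow> ('a \<Rightarrow> 'a \<Rightarrow> bool) \<Rightarrow> 'a \<Rightarrow> 'a \<Rightarrow> bool" where
  "induced_adj S E a b \<longleftrightarrow> a \<in> S \<and> b \<in> S \<and> E a b"

definition component :: "'a set \<Rightarrow> ('a \<Rightarrow> 'a \<Rightarrow> bool) \<Rightarrow> 'a \<Rightarrow> 'a set" where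
  "component S E y = {w. (induced_adj S E)\<^sup>*\<^sup>* y w}"

lemma component_self [simp]: "y \<in> component S E y"
  by (simp add: component_def)

lemma component_subset: "y \<in> S \<Longrightarrow> component S E y \<subseteq> S"
proof
  fix w assume "y \<in> S" "w \<in> component S E y"
  then have "(induced_adj S E)\<^sup>*\<^sup>* y w" by (simp add: component_def)
  then show "w \<in> S"
    using \<open>y \<in> S\<close> by (induction rule: rtranclp_induct) (auto simp: induced_adj_def)
qed

lemma component_closed:
  assumes "y \<in> S" "w \<in> component S E y" "z \<in> S" "E w z"
  shows "z \<in> component S E y"
proof -
  have "w \<in> S" using component_subset[OF assms(1)] assms(2) by blast
  then have "induced_adj S E w z" using assms(3,4) by (simp add: induced_adj_def)
  then show ?thesis
    using assms(2) unfolding component_def by (simp add: rtranclp.rtrancl_into_rtrancl)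
qed

lemma symp_induced_adj: "symp E \<Longrightarrow> symp (induced_adj S E)"
  unfolding symp_def induced_adj_def by blast

lemma acyclic_neighbours_disconnected:
  assumes "acyclic_graph V E" "symp E" "S \<subseteq> V" "x \<in> V" "x \<notin> S"
    and "E x y" "E x y'" "y \<noteq> y'"
  shows "y' \<notin> component S E y"
proof
  assume "y' \<in> component S E y"
  then obtain ps where "rtrancl_path (induced_adj S E) y ps y'"
    unfolding component_def rtranclp_eq_rtrancl_path by blast
  then obtain ps where ps: "rtrancl_path (induced_adj S E) y ps y'" "distinct (y # ps)"
    by (rule rtrancl_path_distinct)
  have "ps \<noteq> []"
    using ps(1) \<open>y \<noteq> y'\<close> by (cases rule: rtrancl_path.cases) simp_all
  have edge: "induced_adj S E ((y # ps) ! i) (ps ! i)" if "i < length ps" for i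
    using rtrancl_path_nth[OF ps(1) that] .
  have "set (y # ps) \<subseteq> S"
  proof -
    have "y \<in> S" using edge[of 0] \<open>ps \<noteq> []\<close> by (simp add: induced_adj_def)
    moreover have "set ps \<subseteq> S"
      using rtrancl_path_Range[OF ps(1)] unfolding induced_adj_def by blast
    ultimately show ?thesis by simp
  qed
  have "last ps = y'" using rtrancl_path_last[OF ps(1) \<open>ps \<noteq> []\<close>] .
  have steps: "E ((x # y # ps) ! i) ((x # y # ps) ! Suc i)" if "i < length ps + 1" for i
  proof (cases i)
    case 0
    then show ?thesis using assms(6) by simp
  next
    case (Suc j)
    then have "induced_adj S E ((y # ps) ! j) (ps ! j)" using edge that by simp
    then show ?thesis using Suc by (simp add: induced_adj_def)
  qed
  have "is_cycle V E (x # y # ps)"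
    unfolding is_cycle_def
  proof (intro conjI)
    show "3 \<le> length (x # y # ps)" using \<open>ps \<noteq> []\<close> by (cases ps) auto
    show "distinct (x # y # ps)" using ps(2) \<open>set (y # ps) \<subseteq> S\<close> assms(5) by auto
    show "set (x # y # ps) \<subseteq> V" using \<open>set (y # ps) \<subseteq> S\<close> assms(3,4) by auto
    show "\<forall>i < length (x # y # ps) - 1. E ((x # y # ps) ! i) ((x # y # ps) ! Suc i)"
      using steps by simp
    show "E (last (x # y # ps)) (hd (x # y # ps))"
      using \<open>last ps = y'\<close> \<open>ps \<noteq> []\<close> assms(7) sympD[OF assms(2)] by simp
  qed
  then show False using assms(1) unfolding acyclic_graph_def by blast
qed

lemma acyclic_neighbour_components_disjoint:
  assumes "acyclic_graph V E" "symp E" "S \<subseteq> V" "x \<in> V" "x \<notin> S"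
    and "E x y" "E x y'" "y \<noteq> y'"
  shows "component S E y \<inter> component S E y' = {}"
proof -
  have "(induced_adj S E)\<^sup>*\<^sup>* y y'"
    if "w \<in> component S E y" "w \<in> component S E y'" for w
  proof -
    have "(induced_adj S E)\<^sup>*\<^sup>* w y'"
      using that(2) symp_rtranclp[OF symp_induced_adj[OF assms(2)]]
      unfolding component_def by (simp add: sympD)
    then show ?thesis using that(1) unfolding component_def by simp
  qed
  then show ?thesis
    using acyclic_neighbours_disconnected[OF assms] unfolding component_def by blast
qed

lemma b_coloringI:
  assumes "\<And>w. w \<in> S \<Longrightarrow> c w \<in> {1..k}"
    and "\<And>w z. w \<in> S \<Longrightarrow> z \<in> S \<Longrightarrow> E w z \<Longrightarrow> c w \<noteq> c z"
    and "\<And>i. i \<in> {1..k} \<Longrightarrow> \<exists>v\<in>S. c v = i \<and> b_vertex S E c k v"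
  shows "b_coloring S E c k"
proof -
  have "c ` S = {1..k}"
    using assms(1,3) by (auto simp del: atLeastAtMost_iff)
  then show ?thesis
    using assms(2,3) unfolding b_coloring_def proper_coloring_def by blast
qed

lemma b_vertex_mono:
  assumes "b_vertex S E c k v" "S \<subseteq> S'" "\<And>w. w \<in> S \<Longrightarrow> c' w = c w"
  shows "b_vertex S' E c' k v"
  using assms unfolding b_vertex_def by (metis subsetD)

lemma b_vertex_permute_colours:
  assumes v: "b_vertex S E c k v" and bij: "bij_betw (\<pi> v) {1..k} {1..k}"
    and const: "\<And>z. z \<in> S \<Longrightarrow> E v z \<Longrightarrow> \<pi> z = \<pi> v"
  shows "b_vertex S E (\<lambda>w. \<pi> w (c w)) k v"
  unfolding b_vertex_def
proof (intro conjI ballI impI)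
  show "v \<in> S" using v by (simp add: b_vertex_def)
  fix j assume j: "j \<in> {1..k}" "j \<noteq> \<pi> v (c v)"
  define j0 where "j0 = inv_into {1..k} (\<pi> v) j"
  have j0: "j0 \<in> {1..k}" "\<pi> v j0 = j"
    using bij_betw_apply[OF bij_betw_inv_into[OF bij] j(1)] bij_betw_inv_into_right[OF bij j(1)]
    unfolding j0_def by simp_all
  then have "j0 \<noteq> c v" using j(2) by blast
  then obtain z where "z \<in> S" "E v z" "c z = j0"
    using v j0(1) unfolding b_vertex_def by blast
  then show "\<exists>z\<in>S. E v z \<and> \<pi> z (c z) = j" using const j0(2) by metis
qed

lemma b_coloring_card_le:
  assumes "finite S" "b_coloring S E c k"
  shows "k \<le> card S"
proof -
  have "c ` S = {1..k}" using assms(2) unfolding b_coloring_def proper_coloring_def by blast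
  then show ?thesis using card_image_le[OF assms(1), of c] by simp
qed

lemma b_coloring_pos: "S \<noteq> {} \<Longrightarrow> b_coloring S E c k \<Longrightarrow> k \<ge> 1"
  unfolding b_coloring_def proper_coloring_def by fastforce

lemma finite_b_coloring_numbers: "finite S \<Longrightarrow> finite {k. \<exists>c. b_coloring S E c k}"
  by (rule finite_subset[of _ "{..card S}"]) (auto dest: b_coloring_card_le)

lemma b_chromatic_ge: "finite S \<Longrightarrow> b_coloring S E c k \<Longrightarrow> k \<le> b_chromatic S E"
  unfolding b_chromatic_def by (rule Max_ge) (auto intro: finite_b_coloring_numbers)

lemma b_chromatic_attained:
  assumes "finite S" "b_coloring S E c k"
  shows "\<exists>c'. b_coloring S E c' (b_chromatic S E)"
proof -
  have "b_chromatic S E \<in> {k. \<exists>c. b_coloring S E c k}"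
    unfolding b_chromatic_def using assms
    by (intro Max_in finite_b_coloring_numbers) auto
  then show ?thesis by simp
qed

locale forest_vertex_extension =
  fixes V S :: "'a set" and E :: "'a \<Rightarrow> 'a \<Rightarrow> bool" and x :: 'a
    and c :: "'a \<Rightarrow> nat" and k :: nat
  assumes simple: "simple_graph V E" and acyclic: "acyclic_graph V E"
    and S_subset: "S \<subseteq> V" and x_in: "x \<in> V" and x_notin: "x \<notin> S"
    and coloring: "b_coloring S E c k"
begin

lemma E_sym: "symp E"
  using simple unfolding simple_graph_def symp_def by blast

lemma E_irrefl: "\<not> E v v"
  using simple unfolding simple_graph_def by blast

lemma colour_range: "w \<in> S \<Longrightarrow> c w \<in> {1..k}"
  using coloring unfolding b_coloring_def proper_coloring_def by blast

lemma colour_proper: "w \<in> S \<Longrightarrow> z \<in> S \<Longrightarrow> E w z \<Longrightarrow> c w \<noteq> c z"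
  using coloring unfolding b_coloring_def proper_coloring_def by blast

lemma b_vertex_exists: "i \<in> {1..k} \<Longrightarrow> \<exists>v\<in>S. c v = i \<and> b_vertex S E c k v"
  using coloring unfolding b_coloring_def by blast

definition nbrs_coloured :: "nat \<Rightarrow> 'a set" where
  "nbrs_coloured t = {y \<in> S. E x y \<and> c y = t}"

definition b_colours :: "'a \<Rightarrow> nat set" where
  "b_colours y = {c v | v. v \<in> component S E y \<and> b_vertex S E c k v}"

text \<open>The components of distinct neighbours of \<open>x\<close> are disjoint, so the \<open>SOME\<close> below
picks the unique neighbour of colour \<open>t\<close> whose component contains \<open>w\<close>.\<close>
definition recolour_perm :: "nat \<Rightarrow> ('a \<Rightarrow> nat) \<Rightarrow> 'a \<Rightarrow> nat \<Rightarrow> nat" where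
  "recolour_perm t u w =
     (if \<exists>y\<in>nbrs_coloured t. w \<in> component S E y
      then transpose t (u (SOME y. y \<in> nbrs_coloured t \<and> w \<in> component S E y))
      else id)"

definition recolour :: "nat \<Rightarrow> ('a \<Rightarrow> nat) \<Rightarrow> 'a \<Rightarrow> nat" where
  "recolour t u w = (if w = x then t else recolour_perm t u w (c w))"

lemma nbrs_coloured_components_disjoint:
  assumes "y \<in> nbrs_coloured t" "y' \<in> nbrs_coloured t'" "y \<noteq> y'"
  shows "component S E y \<inter> component S E y' = {}"
proof -
  have "E x y" "E x y'" using assms(1,2) by (simp_all add: nbrs_coloured_def)
  then show ?thesis
    by (rule acyclic_neighbour_components_disjoint[OF acyclic E_sym S_subset x_in x_notin _ _ assms(3)])
qed

lemma recolour_perm_in_component: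
  assumes y: "y \<in> nbrs_coloured t" and w: "w \<in> component S E y"
  shows "recolour_perm t u w = transpose t (u y)"
proof -
  let ?P = "\<lambda>y. y \<in> nbrs_coloured t \<and> w \<in> component S E y"
  have "?P (SOME y. ?P y)" using someI_ex[of ?P] y w by blast
  moreover have "y' = y" if "?P y'" for y'
  proof (rule ccontr)
    assume "y' \<noteq> y"
    then have "component S E y' \<inter> component S E y = {}"
      using nbrs_coloured_components_disjoint that y by blast
    then show False using that w by blast
  qed
  ultimately have "(SOME y. ?P y) = y" by blast
  moreover have "\<exists>y\<in>nbrs_coloured t. w \<in> component S E y" using y w by blast
  ultimately show ?thesis unfolding recolour_perm_def by simp
qed

lemma recolour_perm_outside:
  "(\<And>y. y \<in> nbrs_coloured t \<Longrightarrow> w \<notin> component S E y) \<Longrightarrow> recolour_perm t u w = id"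
  unfolding recolour_perm_def by auto

lemma recolour_perm_adjacent:
  assumes "w \<in> S" "z \<in> S" "E w z"
  shows "recolour_perm t u z = recolour_perm t u w"
proof (cases "\<exists>y\<in>nbrs_coloured t. w \<in> component S E y")
  case True
  then obtain y where y: "y \<in> nbrs_coloured t" "w \<in> component S E y" by blast
  then have "y \<in> S" by (simp add: nbrs_coloured_def)
  then have "z \<in> component S E y" using y(2) assms(2,3) by (rule component_closed)
  then show ?thesis using recolour_perm_in_component y by simp
next
  case False
  have "z \<notin> component S E y" if "y \<in> nbrs_coloured t" for y
  proof
    assume z: "z \<in> component S E y"
    have "y \<in> S" using that by (simp add: nbrs_coloured_def)
    then have "w \<in> component S E y"
      using z assms(1) sympD[OF E_sym assms(3)] by (rule component_closed)
    then show False using False that by blast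
  qed
  then have "recolour_perm t u z = id" by (rule recolour_perm_outside)
  moreover have "recolour_perm t u w = id" using False by (intro recolour_perm_outside) blast
  ultimately show ?thesis by simp
qed

lemma recolour_perm_other_nbr:
  assumes "z \<in> S" "E x z" "c z \<noteq> t"
  shows "recolour_perm t u z = id"
proof (rule recolour_perm_outside)
  fix y assume y: "y \<in> nbrs_coloured t"
  then have "y \<noteq> z" "E x y" using assms(3) unfolding nbrs_coloured_def by auto
  then show "z \<notin> component S E y"
    using acyclic_neighbours_disconnected[OF acyclic E_sym S_subset x_in x_notin _ assms(2)] by blast
qed

lemma recolour_x [simp]: "recolour t u x = t"
  by (simp add: recolour_def)

lemma recolour_on_S: "w \<in> S \<Longrightarrow> recolour t u w = recolour_perm t u w (c w)"
  using x_notin by (auto simp: recolour_def)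

lemma recolour_fixes:
  assumes "v \<in> S"
    and "\<And>y. y \<in> nbrs_coloured t \<Longrightarrow> v \<in> component S E y \<Longrightarrow> c v \<noteq> t \<and> c v \<noteq> u y"
  shows "recolour t u v = c v"
proof (cases "\<exists>y\<in>nbrs_coloured t. v \<in> component S E y")
  case True
  then obtain y where y: "y \<in> nbrs_coloured t" "v \<in> component S E y" by blast
  have "recolour t u v = transpose t (u y) (c v)"
    using recolour_on_S[OF assms(1)] recolour_perm_in_component[OF y] by simp
  then show ?thesis using assms(2)[OF y] by simp
next
  case False
  then have "recolour_perm t u v = id" by (intro recolour_perm_outside) blast
  then show ?thesis using recolour_on_S[OF assms(1)] by simp
qed

definition admissible_swap :: "nat \<Rightarrow> ('a \<Rightarrow> nat) \<Rightarrow> bool" where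
  "admissible_swap t u \<longleftrightarrow> t \<in> {1..k} \<and> (\<forall>y\<in>nbrs_coloured t. u y \<in> {1..k} \<and> u y \<noteq> t)"

lemma admissible_swapD:
  "admissible_swap t u \<Longrightarrow> t \<in> {1..k}"
  "admissible_swap t u \<Longrightarrow> y \<in> nbrs_coloured t \<Longrightarrow> u y \<in> {1..k} \<and> u y \<noteq> t"
  by (simp_all add: admissible_swap_def)

context
  fixes t :: nat and u :: "'a \<Rightarrow> nat"
  assumes admissible: "admissible_swap t u"
begin

lemma recolour_perm_bij: "bij_betw (recolour_perm t u w) {1..k} {1..k}"
proof (cases "\<exists>y\<in>nbrs_coloured t. w \<in> component S E y")
  case True
  then obtain y where "y \<in> nbrs_coloured t" "w \<in> component S E y" by blast
  then show ?thesis using recolour_perm_in_component admissible_swapD[OF admissible] by simp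
next
  case False
  then show ?thesis using recolour_perm_outside by auto
qed

lemma recolour_range: "w \<in> insert x S \<Longrightarrow> recolour t u w \<in> {1..k}"
  using admissible_swapD(1)[OF admissible] recolour_on_S bij_betwE[OF recolour_perm_bij] colour_range
  by auto

lemma recolour_nbr: assumes "z \<in> S" "E x z" shows "recolour t u z \<noteq> t"
proof (cases "c z = t")
  case True
  then have "z \<in> nbrs_coloured t" using assms unfolding nbrs_coloured_def by blast
  then show ?thesis
    using recolour_on_S[OF assms(1)] recolour_perm_in_component[OF _ component_self] True
      admissible_swapD(2)[OF admissible]
    by simp
next
  case False
  then show ?thesis using recolour_on_S[OF assms(1)] recolour_perm_other_nbr[OF assms] by simp
qed

lemma recolour_proper:
  assumes "w \<in> insert x S" "z \<in> insert x S" "E w z"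
  shows "recolour t u w \<noteq> recolour t u z"
proof -
  have "w \<noteq> z" using assms(3) E_irrefl by blast
  consider "w = x" "z \<in> S" | "z = x" "w \<in> S" | "w \<in> S" "z \<in> S"
    using assms(1,2) \<open>w \<noteq> z\<close> by blast
  then show ?thesis
  proof cases
    case 1
    then show ?thesis using recolour_nbr assms(3) by (metis recolour_x)
  next
    case 2
    then show ?thesis using recolour_nbr sympD[OF E_sym assms(3)] by (metis recolour_x)
  next
    case 3
    have "c w \<noteq> c z" "c w \<in> {1..k}" "c z \<in> {1..k}"
      using colour_proper[OF 3 assms(3)] colour_range 3 by auto
    then have "recolour_perm t u w (c w) \<noteq> recolour_perm t u w (c z)"
      using inj_onD[OF bij_betw_imp_inj_on[OF recolour_perm_bij]] by blast
    then show ?thesis using recolour_on_S recolour_perm_adjacent[OF 3 assms(3)] 3 by simp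
  qed
qed

lemma recolour_b_vertex:
  assumes "b_vertex S E c k v"
  shows "b_vertex (insert x S) E (recolour t u) k v"
proof (rule b_vertex_mono)
  have "v \<in> S" using assms by (simp add: b_vertex_def)
  show "b_vertex S E (\<lambda>w. recolour_perm t u w (c w)) k v"
    using b_vertex_permute_colours[where \<pi> = "recolour_perm t u",
        OF assms recolour_perm_bij recolour_perm_adjacent[OF \<open>v \<in> S\<close>]] .
qed (auto simp: recolour_on_S)

lemma recolour_x_b_vertex:
  assumes "\<And>j. j \<in> {1..k} \<Longrightarrow> nbrs_coloured j \<noteq> {}"
  shows "b_vertex (insert x S) E (recolour t u) k x"
  unfolding b_vertex_def
proof (intro conjI ballI impI)
  fix j assume "j \<in> {1..k}" "j \<noteq> recolour t u x"
  then obtain y where y: "y \<in> S" "E x y" "c y = j" "j \<noteq> t"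
    using assms unfolding nbrs_coloured_def by auto
  then have "recolour t u y = j" using recolour_on_S recolour_perm_other_nbr by simp
  then show "\<exists>z\<in>insert x S. E x z \<and> recolour t u z = j" using y by blast
qed simp

lemma recolour_keeps_b_vertex:
  assumes "b_vertex S E c k v" "recolour t u v = c v"
  shows "\<exists>w\<in>insert x S. recolour t u w = c v \<and> b_vertex (insert x S) E (recolour t u) k w"
  using assms recolour_b_vertex[OF assms(1)] unfolding b_vertex_def by blast

lemma recolour_b_coloring:
  assumes "\<And>i. i \<in> {1..k} \<Longrightarrow>
      \<exists>v\<in>insert x S. recolour t u v = i \<and> b_vertex (insert x S) E (recolour t u) k v"
  shows "b_coloring (insert x S) E (recolour t u) k"
  using recolour_range recolour_proper assms by (rule b_coloringI)

end

lemma extension_missing_colour: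
  assumes t: "t \<in> {1..k}" and missing: "nbrs_coloured t = {}"
  shows "b_coloring (insert x S) E (recolour t u) k"
proof -
  have adm: "admissible_swap t u" using t missing by (simp add: admissible_swap_def)
  show ?thesis
  proof (rule recolour_b_coloring[OF adm])
    fix i assume "i \<in> {1..k}"
    then obtain v where v: "v \<in> S" "c v = i" "b_vertex S E c k v" using b_vertex_exists by blast
    have "recolour t u v = c v" using missing by (intro recolour_fixes[OF v(1)]) simp_all
    then show "\<exists>v\<in>insert x S. recolour t u v = i \<and> b_vertex (insert x S) E (recolour t u) k v"
      using recolour_keeps_b_vertex[OF adm v(3)] v(2) by blast
  qed
qed

text \<open>With two colours the old b-vertices of colour 2 may all be swapped to colour 1; instead
a neighbour of \<open>x\<close> recoloured to 2 is a b-vertex through \<open>x\<close>.\<close>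
lemma extension_two_colours:
  assumes k: "k = 2" and full: "\<And>j. j \<in> {1..k} \<Longrightarrow> nbrs_coloured j \<noteq> {}"
  shows "b_coloring (insert x S) E (recolour 1 (\<lambda>_. 2)) k"
proof -
  have t: "1 \<in> {1..k}" and adm: "admissible_swap 1 (\<lambda>_. 2)"
    unfolding admissible_swap_def using k by simp_all
  show ?thesis
  proof (rule recolour_b_coloring[OF adm])
    fix i assume i: "i \<in> {1..k}"
    show "\<exists>v\<in>insert x S. recolour 1 (\<lambda>_. 2) v = i \<and> b_vertex (insert x S) E (recolour 1 (\<lambda>_. 2)) k v"
    proof (cases "i = 1")
      case True
      then show ?thesis using recolour_x_b_vertex[OF adm full] by force
    next
      case False
      obtain y where y: "y \<in> S" "E x y" using full[OF t] unfolding nbrs_coloured_def by blast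
      have "recolour 1 (\<lambda>_. 2) y = 2"
        using recolour_range[OF adm, of y] recolour_nbr[OF adm y] y(1) k by auto
      moreover have "b_vertex (insert x S) E (recolour 1 (\<lambda>_. 2)) k y"
        using y sympD[OF E_sym y(2)] k calculation unfolding b_vertex_def by auto
      moreover have "i = 2" using i k False by auto
      ultimately show ?thesis using y(1) by blast
    qed
  qed
qed

lemma extension_spare_colour:
  assumes t: "t \<in> {1..k}" and full: "\<And>j. j \<in> {1..k} \<Longrightarrow> nbrs_coloured j \<noteq> {}"
    and spare: "\<And>y. y \<in> nbrs_coloured t \<Longrightarrow> \<exists>w\<in>{1..k}. w \<noteq> t \<and> w \<notin> b_colours y"
  shows "\<exists>u. b_coloring (insert x S) E (recolour t u) k"
proof -
  define u where "u y = (SOME w. w \<in> {1..k} \<and> w \<noteq> t \<and> w \<notin> b_colours y)" for y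
  have u: "u y \<in> {1..k} \<and> u y \<noteq> t \<and> u y \<notin> b_colours y" if "y \<in> nbrs_coloured t" for y
    using someI_ex[of "\<lambda>w. w \<in> {1..k} \<and> w \<noteq> t \<and> w \<notin> b_colours y"] spare[OF that]
    unfolding u_def by blast
  then have adm: "admissible_swap t u" using t by (simp add: admissible_swap_def)
  have "b_coloring (insert x S) E (recolour t u) k"
  proof (rule recolour_b_coloring[OF adm])
    fix i assume i: "i \<in> {1..k}"
    show "\<exists>v\<in>insert x S. recolour t u v = i \<and> b_vertex (insert x S) E (recolour t u) k v"
    proof (cases "i = t")
      case True
      then show ?thesis using recolour_x_b_vertex[OF adm full] by force
    next
      case False
      obtain v where v: "v \<in> S" "c v = i" "b_vertex S E c k v" using b_vertex_exists[OF i] by blast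
      have "recolour t u v = c v"
      proof (rule recolour_fixes[OF v(1)])
        fix y assume y: "y \<in> nbrs_coloured t" "v \<in> component S E y"
        then have "c v \<in> b_colours y" using v(3) unfolding b_colours_def by blast
        then show "c v \<noteq> t \<and> c v \<noteq> u y" using u[OF y(1)] v(2) False by auto
      qed
      then show ?thesis using recolour_keeps_b_vertex[OF adm v(3)] v(2) by blast
    qed
  qed
  then show ?thesis by blast
qed

text \<open>Swap colours 1 and 3: colour 2 keeps its b-vertex in the component of \<open>y1\<close>,
and the colours \<open>\<ge> 3\<close> keep theirs in the component of \<open>y2\<close>, which is left untouched.\<close>
lemma extension_saturated:
  assumes k: "k \<ge> 3"
    and saturated: "\<And>t. t \<in> {1..k} \<Longrightarrow> \<exists>y\<in>nbrs_coloured t. {1..k} - {t} \<subseteq> b_colours y"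
  shows "b_coloring (insert x S) E (recolour 1 (\<lambda>_. 3)) k"
proof -
  have t: "1 \<in> {1..k}" and adm: "admissible_swap 1 (\<lambda>_. 3)"
    unfolding admissible_swap_def using k by simp_all
  have full: "\<And>j. j \<in> {1..k} \<Longrightarrow> nbrs_coloured j \<noteq> {}" using saturated by blast
  obtain y1 where y1: "y1 \<in> nbrs_coloured 1" "{1..k} - {1} \<subseteq> b_colours y1"
    using saturated[OF t] by blast
  have "2 \<in> {1..k}" using k by simp
  then obtain y2 where y2: "y2 \<in> nbrs_coloured 2" "{1..k} - {2} \<subseteq> b_colours y2"
    using saturated by blast
  show ?thesis
  proof (rule recolour_b_coloring[OF adm])
    fix i assume i: "i \<in> {1..k}"
    have "i = 1 \<or> i = 2 \<or> i \<ge> 3" using i by auto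
    then consider "i = 1" | "i = 2" | "i \<ge> 3" by blast
    then show "\<exists>v\<in>insert x S. recolour 1 (\<lambda>_. 3) v = i \<and> b_vertex (insert x S) E (recolour 1 (\<lambda>_. 3)) k v"
    proof cases
      case 1
      then show ?thesis using recolour_x_b_vertex[OF adm full] by force
    next
      case 2
      then have "i \<in> b_colours y1" using y1(2) i by force
      then obtain v where v: "v \<in> component S E y1" "b_vertex S E c k v" "c v = i"
        unfolding b_colours_def by blast
      have "v \<in> S" using v(2) by (simp add: b_vertex_def)
      then have "recolour 1 (\<lambda>_. 3) v = c v" using v(3) 2 by (intro recolour_fixes) auto
      then show ?thesis using recolour_keeps_b_vertex[OF adm v(2)] v(3) by blast
    next
      case 3
      then have "i \<in> b_colours y2" using y2(2) i by force
      then obtain v where v: "v \<in> component S E y2" "b_vertex S E c k v" "c v = i"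
        unfolding b_colours_def by blast
      have "v \<in> S" using v(2) by (simp add: b_vertex_def)
      have "v \<notin> component S E y" if "y \<in> nbrs_coloured 1" for y
      proof -
        have "y \<noteq> y2" using that y2(1) by (auto simp: nbrs_coloured_def)
        then show ?thesis using nbrs_coloured_components_disjoint[OF that y2(1)] v(1) by blast
      qed
      then have "recolour 1 (\<lambda>_. 3) v = c v" by (intro recolour_fixes[OF \<open>v \<in> S\<close>]) blast
      then show ?thesis using recolour_keeps_b_vertex[OF adm v(2)] v(3) by blast
    qed
  qed
qed

theorem b_coloring_extends_to_vertex:
  assumes "k \<ge> 2"
  shows "\<exists>c'. b_coloring (insert x S) E c' k"
proof (cases "\<exists>t\<in>{1..k}. nbrs_coloured t = {}")
  case True
  then show ?thesis using extension_missing_colour by blast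
next
  case False
  then have full: "\<And>j. j \<in> {1..k} \<Longrightarrow> nbrs_coloured j \<noteq> {}" by blast
  show ?thesis
  proof (cases "k = 2")
    case True
    then show ?thesis using extension_two_colours full by blast
  next
    case False
    show ?thesis
    proof (cases "\<exists>t\<in>{1..k}. \<forall>y\<in>nbrs_coloured t. \<exists>w\<in>{1..k}. w \<noteq> t \<and> w \<notin> b_colours y")
      case True
      then show ?thesis using extension_spare_colour full by blast
    next
      case no_spare: False
      have "\<exists>y\<in>nbrs_coloured t. {1..k} - {t} \<subseteq> b_colours y" if "t \<in> {1..k}" for t
        using no_spare that by blast
      moreover have "k \<ge> 3" using \<open>k \<ge> 2\<close> False by simp
      ultimately show ?thesis using extension_saturated by blast
    qed
  qed
qed

end

lemma simple_graph_finite_subset: "simple_graph V E \<Longrightarrow> S \<subseteq> V \<Longrightarrow> finite S"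
  unfolding simple_graph_def by (auto intro: finite_subset)

lemma forest_b_coloring_extends:
  assumes simple: "simple_graph V E" and acyclic: "acyclic_graph V E"
    and AB: "A \<subseteq> B" and BV: "B \<subseteq> V" and coloring: "b_coloring A E c k" and k: "k \<ge> 2"
  shows "\<exists>c'. b_coloring B E c' k"
proof -
  have grow: "\<exists>c'. b_coloring (A \<union> D) E c' k" if "finite D" "D \<subseteq> V" for D
    using that
  proof (induction D rule: finite_induct)
    case empty
    then show ?case using coloring by auto
  next
    case (insert y D)
    then obtain c' where c': "b_coloring (A \<union> D) E c' k" by blast
    show ?case
    proof (cases "y \<in> A")
      case True
      then show ?thesis using c' by (auto simp: insert_absorb)
    next
      case False
      interpret forest_vertex_extension V "A \<union> D" E y c' k
        using simple acyclic AB BV insert.prems insert.hyps(2) False c' by unfold_locales auto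
      show ?thesis using b_coloring_extends_to_vertex[OF k] by simp
    qed
  qed
  have "finite (B - A)" using simple_graph_finite_subset[OF simple] BV by blast
  moreover have "B - A \<subseteq> V" using BV by blast
  moreover have "A \<union> (B - A) = B" using AB by blast
  ultimately show ?thesis using grow by metis
qed

lemma forest_b_coloring_exists:
  assumes simple: "simple_graph V E" and acyclic: "acyclic_graph V E" and SV: "S \<subseteq> V"
  shows "\<exists>c k. b_coloring S E c k"
proof -
  have E_irrefl: "\<not> E w w" and E_sym: "E w z \<Longrightarrow> E z w" for w z
    using simple unfolding simple_graph_def by blast+
  consider "S = {}" | "S \<noteq> {}" "\<forall>a\<in>S. \<forall>b\<in>S. \<not> E a b" | a b where "a \<in> S" "b \<in> S" "E a b"
    by blast
  then show ?thesis
  proof cases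
    case 1
    then have "b_coloring S E (\<lambda>_. 1) 0"
      unfolding b_coloring_def proper_coloring_def by simp
    then show ?thesis by blast
  next
    case 2
    then have "b_coloring S E (\<lambda>_. 1) 1"
      unfolding b_coloring_def proper_coloring_def b_vertex_def by auto
    then show ?thesis by blast
  next
    case 3
    have "a \<noteq> b" using 3(3) E_irrefl by blast
    define c where "c w = (if w = a then 1 else 2 :: nat)" for w
    have "b_coloring {a, b} E c 2"
    proof (rule b_coloringI)
      show "\<And>w. w \<in> {a, b} \<Longrightarrow> c w \<in> {1..2}" by (auto simp: c_def)
      show "\<And>w z. w \<in> {a, b} \<Longrightarrow> z \<in> {a, b} \<Longrightarrow> E w z \<Longrightarrow> c w \<noteq> c z"
        using E_irrefl \<open>a \<noteq> b\<close> unfolding c_def by auto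
      fix i :: nat assume "i \<in> {1..2}"
      then have "i = c a \<or> i = c b" using \<open>a \<noteq> b\<close> by (auto simp: c_def)
      moreover have "b_vertex {a, b} E c 2 a" "b_vertex {a, b} E c 2 b"
        using 3(3) E_sym[OF 3(3)] \<open>a \<noteq> b\<close> unfolding b_vertex_def c_def by auto
      ultimately show "\<exists>v\<in>{a, b}. c v = i \<and> b_vertex {a, b} E c 2 v" by blast
    qed
    moreover have "{a, b} \<subseteq> S" using 3 by blast
    ultimately show ?thesis using forest_b_coloring_extends[OF simple acyclic _ SV] by blast
  qed
qed

lemma forest_b_chromatic_induced_le:
  assumes simple: "simple_graph V E" and acyclic: "acyclic_graph V E"
    and "V \<noteq> {}" and SV: "S \<subseteq> V"
  shows "b_chromatic S E \<le> b_chromatic V E"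
proof -
  have fin: "finite S" "finite V"
    using simple_graph_finite_subset[OF simple] SV by auto
  obtain c where c: "b_coloring S E c (b_chromatic S E)"
    using forest_b_coloring_exists[OF simple acyclic SV] b_chromatic_attained[OF fin(1)] by blast
  show ?thesis
  proof (cases "b_chromatic S E \<ge> 2")
    case True
    then obtain c' where "b_coloring V E c' (b_chromatic S E)"
      using forest_b_coloring_extends[OF simple acyclic SV order_refl c] by blast
    then show ?thesis by (rule b_chromatic_ge[OF fin(2)])
  next
    case False
    obtain cV kV where cV: "b_coloring V E cV kV"
      using forest_b_coloring_exists[OF simple acyclic order_refl] by blast
    have "1 \<le> kV" using b_coloring_pos[OF \<open>V \<noteq> {}\<close> cV] .
    also have "kV \<le> b_chromatic V E" using b_chromatic_ge[OF fin(2) cV] .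
    finally show ?thesis using False by linarith
  qed
qed

theorem mainTheorem18:
  fixes V :: "'a set" and E :: "'a \<Rightarrow> 'a \<Rightarrow> bool"
  assumes "tree V E"
  shows "b_chromatic V E = b_relaxed V E"
proof -
  have simple: "simple_graph V E" and acyclic: "acyclic_graph V E" and "V \<noteq> {}"
    using assms unfolding tree_def connected_graph_def by blast+
  have "{b_chromatic S E | S. S \<subseteq> V} = (\<lambda>S. b_chromatic S E) ` Pow V" by blast
  then have "finite {b_chromatic S E | S. S \<subseteq> V}"
    using simple_graph_finite_subset[OF simple] by simp
  then have "Max {b_chromatic S E | S. S \<subseteq> V} = b_chromatic V E"
    using forest_b_chromatic_induced_le[OF simple acyclic \<open>V \<noteq> {}\<close>] by (intro Max_eqI) auto
  then show ?thesis unfolding b_relaxed_def by simp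
qed

end
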